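(* With $\mathsf{S}_-(\mathsf{H},\zeta)$ and $\mathsf{S}_+(\mathsf{H},\zeta)$ the odd and even Hopf subalgebras, one has: (1) $\mathrm{S}(\mathrm{O}(V))\subseteq\mathsf{S}_-(\mathrm{S}(V),\zeta_{\mathrm{S}(V)})$ and $\mathrm{S}(\mathrm{E}(V))\subseteq\mathsf{S}_+(\mathrm{S}(V),\zeta_{\mathrm{S}(V)})$; (2) $\mathrm{T}(\mathrm{O}(V))\subseteq\mathsf{S}_-(\mathrm{T}(V),\zeta_{\mathrm{T}(V)})$ and $\mathrm{T}(\mathrm{E}(V))\subseteq\mathsf{S}_+(\mathrm{T}(V),\zeta_{\mathrm{T}(V)})$; (3) $\mathrm{Sym}(\mathrm{O}(V))\subseteq\mathsf{S}_-(\mathrm{Sym}(V),\zeta_{\mathrm{Sym}(V)})$ and $\mathrm{Sym}(\mathrm{E}(V))\subseteq\mathsf{S}_+(\mathrm{Sym}(V),\zeta_{\mathrm{Sym}(V)})$.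
   Context: For a combinatorial Hopf algebra $(\mathsf{H},\zeta)$ ($\mathsf{H}$ graded connected, $\zeta$ a character), $\bar\zeta|_{\mathsf{H}_n}=(-1)^n\zeta|_{\mathsf{H}_n}$, $\zeta^{-1}=\zeta\circ\mathcal{S}$, and $\mathsf{S}_-(\mathsf{H},\zeta)$ (resp. $\mathsf{S}_+$) is the largest subcoalgebra in $\ker(\overline{\zeta^{-1}}-\zeta)$ (resp. $\ker(\bar\zeta-\zeta)$). $V$ is a graded vector space with homogeneous basis $\{v_i\}$. $\mathrm{S}(V)$ is the shuffle algebra on words $v_\alpha$ (product: sum over all shuffles of the two words, i.e. interleavings preserving order within each; coproduct: deconcatenation), with character $\zeta_{\mathrm{S}(V)}=\zeta_{\mathrm{QSym}}\circ\Phi_{\mathrm{S}(V)}$ where $\Phi_{\mathrm{S}(V)}(v_\alpha)=S_{(\deg v_{\alpha_1},\dots,\deg v_{\alpha_\ell})}$ (shuffle basis of $\mathrm{QSym}$) and $\zeta_{\mathrm{QSym}}(f)=f(1,0,0,\dots)$. $\mathrm{T}(V)$ is the tensor algebra (concatenation product, $v_i$ primitive) with character $\zeta_{\mathrm{T}(V)}(v_i)=1/\deg(v_i)$ extended multiplicatively; $\mathrm{Sym}(V)=\mathrm{T}(V)/\langle v_iv_j-v_jv_i\rangle$ with induced character $\zeta_{\mathrm{Sym}(V)}(\overline{v_i})=1/\deg(v_i)$. $\mathrm{S}(\mathrm{O}(V))$, $\mathrm{T}(\mathrm{O}(V))$, $\mathrm{Sym}(\mathrm{O}(V))$ (resp.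 with $\mathrm{E}$) are spanned by the words (classes) all of whose letters have odd (resp. even) degree. *)

theory Defs
  imports Main "HOL-Library.Multiset"
begin

text \<open>A vector space with basis indexed by type 'b over a field 'k is modelled as the
finitely supported functions 'b => 'k (coefficients w.r.t. the basis).\<close>

definition fsupp :: "('b \<Rightarrow> 'k::zero) \<Rightarrow> 'b set" where
  "fsupp f = {b. f b \<noteq> 0}"

definition vecs :: "('b \<Rightarrow> 'k::zero) set" where
  "vecs = {f. finite (fsupp f)}"

definition lin_span :: "('b \<Rightarrow> 'k::field) set \<Rightarrow> ('b \<Rightarrow> 'k) set" where
  "lin_span A = {f. \<exists>F c. finite F \<and> F \<subseteq> A \<and> f = (\<lambda>b. \<Sum>g\<in>F. c g * g b)}"

definition subspace_of :: "('b \<Rightarrow> 'k::field) set \<Rightarrow> bool" where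
  "subspace_of C \<longleftrightarrow> C \<subseteq> vecs \<and> (\<lambda>_. 0) \<in> C
     \<and> (\<forall>f\<in>C. \<forall>g\<in>C. (\<lambda>b. f b + g b) \<in> C)
     \<and> (\<forall>a. \<forall>f\<in>C. (\<lambda>b. a * f b) \<in> C)"

definition tens :: "('b \<Rightarrow> 'k::field) \<Rightarrow> ('b \<Rightarrow> 'k) \<Rightarrow> ('b \<times> 'b \<Rightarrow> 'k)" where
  "tens f g = (\<lambda>(x, y). f x * g y)"

definition tensor_sq :: "('b \<Rightarrow> 'k::field) set \<Rightarrow> ('b \<times> 'b \<Rightarrow> 'k) set" where
  "tensor_sq C = lin_span {tens f g | f g. f \<in> C \<and> g \<in> C}"

text \<open>A coproduct is given by Delta b = the element of H (x) H (coefficients on pairs of basis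
elements), extended linearly.\<close>

definition coprod :: "('b \<Rightarrow> ('b \<times> 'b \<Rightarrow> 'k::field)) \<Rightarrow> ('b \<Rightarrow> 'k) \<Rightarrow> ('b \<times> 'b \<Rightarrow> 'k)" where
  "coprod Delta f = (\<lambda>p. \<Sum>b\<in>fsupp f. f b * Delta b p)"

definition subcoalgebra :: "('b \<Rightarrow> ('b \<times> 'b \<Rightarrow> 'k::field)) \<Rightarrow> ('b \<Rightarrow> 'k) set \<Rightarrow> bool" where
  "subcoalgebra Delta C \<longleftrightarrow> subspace_of C \<and> (\<forall>f\<in>C. coprod Delta f \<in> tensor_sq C)"

text \<open>Linear functionals are given by their values on the basis.\<close>
definition apply_fun :: "('b \<Rightarrow> 'k::field) \<Rightarrow> ('b \<Rightarrow> 'k) \<Rightarrow> 'k" where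
  "apply_fun phi f = (\<Sum>b\<in>fsupp f. f b * phi b)"

definition ker_fun :: "('b \<Rightarrow> 'k::field) \<Rightarrow> ('b \<Rightarrow> 'k) set" where
  "ker_fun phi = {f \<in> vecs. apply_fun phi f = 0}"

definition largest_subcoalg :: "('b \<Rightarrow> ('b \<times> 'b \<Rightarrow> 'k::field)) \<Rightarrow> ('b \<Rightarrow> 'k) set \<Rightarrow> ('b \<Rightarrow> 'k) set" where
  "largest_subcoalg Delta K = lin_span (\<Union>{C. subcoalgebra Delta C \<and> C \<subseteq> K})"

definition conv :: "('b \<Rightarrow> ('b \<times> 'b \<Rightarrow> 'k::field)) \<Rightarrow> ('b \<Rightarrow> 'k) \<Rightarrow> ('b \<Rightarrow> 'k) \<Rightarrow> ('b \<Rightarrow> 'k)" where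
  "conv Delta phi psi = (\<lambda>b. \<Sum>p\<in>fsupp (Delta b). Delta b p * phi (fst p) * psi (snd p))"

text \<open>Inverse of a character in the convolution algebra (equals zeta o antipode).\<close>
definition conv_inv :: "('b \<Rightarrow> ('b \<times> 'b \<Rightarrow> 'k::field)) \<Rightarrow> ('b \<Rightarrow> 'k) \<Rightarrow> ('b \<Rightarrow> 'k) \<Rightarrow> ('b \<Rightarrow> 'k)" where
  "conv_inv Delta eps zeta = (THE psi. conv Delta zeta psi = eps \<and> conv Delta psi zeta = eps)"

definition bar :: "('b \<Rightarrow> nat) \<Rightarrow> ('b \<Rightarrow> 'k::field) \<Rightarrow> ('b \<Rightarrow> 'k)" where
  "bar dg phi = (\<lambda>b. (-1) ^ dg b * phi b)"

definition S_minus :: "('b \<Rightarrow> ('b \<times> 'b \<Rightarrow> 'k::field)) \<Rightarrow> ('b \<Rightarrow> 'k) \<Rightarrow> ('b \<Rightarrow> nat) \<Rightarrow> ('b \<Rightarrow> 'k) \<Rightarrow> ('b \<Rightarrow> 'k) set" where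
  "S_minus Delta eps dg zeta =
     largest_subcoalg Delta (ker_fun (\<lambda>b. bar dg (conv_inv Delta eps zeta) b - zeta b))"

definition S_plus :: "('b \<Rightarrow> ('b \<times> 'b \<Rightarrow> 'k::field)) \<Rightarrow> ('b \<Rightarrow> nat) \<Rightarrow> ('b \<Rightarrow> 'k) \<Rightarrow> ('b \<Rightarrow> 'k) set" where
  "S_plus Delta dg zeta = largest_subcoalg Delta (ker_fun (\<lambda>b. bar dg zeta b - zeta b))"

definition word_deg :: "('i \<Rightarrow> nat) \<Rightarrow> 'i list \<Rightarrow> nat" where
  "word_deg deg w = sum_list (map deg w)"

definition mset_deg :: "('i \<Rightarrow> nat) \<Rightarrow> 'i multiset \<Rightarrow> nat" where
  "mset_deg deg m = sum_mset (image_mset deg m)"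

definition eps_word :: "'i list \<Rightarrow> 'k::field" where
  "eps_word w = (if w = [] then 1 else 0)"

definition eps_mset :: "'i multiset \<Rightarrow> 'k::field" where
  "eps_mset m = (if m = {#} then 1 else 0)"

text \<open>Deconcatenation coproduct (shuffle algebra S(V)).\<close>
definition deconc :: "'i list \<Rightarrow> ('i list \<times> 'i list \<Rightarrow> 'k::field)" where
  "deconc w = (\<lambda>(x, y). if x @ y = w then 1 else 0)"

text \<open>Unshuffle coproduct (tensor algebra T(V), letters primitive).\<close>
definition unshuffle :: "'i list \<Rightarrow> ('i list \<times> 'i list \<Rightarrow> 'k::field)" where
  "unshuffle w = (\<lambda>(x, y). of_nat (card {I. I \<subseteq> {..<length w} \<and> nths w I = x
                                        \<and> nths w ({..<length w} - I) = y}))"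

text \<open>Coproduct of Sym(V) on monomials (multisets of basis letters).\<close>
definition sym_coprod :: "'i multiset \<Rightarrow> ('i multiset \<times> 'i multiset \<Rightarrow> 'k::field)" where
  "sym_coprod m = (\<lambda>(a, b). if a + b = m
       then (\<Prod>i\<in>set_mset m. of_nat (count m i choose count a i)) else 0)"

definition zeta_T :: "('i \<Rightarrow> nat) \<Rightarrow> 'i list \<Rightarrow> 'k::field" where
  "zeta_T deg w = prod_list (map (\<lambda>i. 1 / of_nat (deg i)) w)"

definition zeta_Sym :: "('i \<Rightarrow> nat) \<Rightarrow> 'i multiset \<Rightarrow> 'k::field" where
  "zeta_Sym deg m = prod_mset (image_mset (\<lambda>i. 1 / of_nat (deg i)) m)"

text \<open>QSym elements are given by coefficients in the monomial basis M_alpha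
(alpha a composition, i.e. a list of positive naturals).  M_alpha evaluated at a point x
whose coordinates x_i vanish for i >= N.\<close>
definition M_eval :: "nat \<Rightarrow> (nat \<Rightarrow> 'k::field) \<Rightarrow> nat list \<Rightarrow> 'k" where
  "M_eval N x alpha = (\<Sum>is\<in>{is. sorted_wrt (<) is \<and> length is = length alpha \<and> set is \<subseteq> {..<N}}.
       \<Prod>j<length alpha. x (is ! j) ^ (alpha ! j))"

definition qsym_eval :: "nat \<Rightarrow> (nat \<Rightarrow> 'k::field) \<Rightarrow> (nat list \<Rightarrow> 'k) \<Rightarrow> 'k" where
  "qsym_eval N x f = (\<Sum>alpha\<in>fsupp f. f alpha * M_eval N x alpha)"

definition zeta_QSym :: "(nat list \<Rightarrow> 'k::field) \<Rightarrow> 'k" where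
  "zeta_QSym f = qsym_eval 1 (\<lambda>i. if i = 0 then 1 else 0) f"

text \<open>Shuffle basis S_alpha of QSym (Hoffman's exponential of M_alpha), in the M basis:
S_alpha = sum over decompositions of alpha into consecutive nonempty blocks
alpha = alpha^1 ... alpha^k of M_(|alpha^1|,...,|alpha^k|) / (l(alpha^1)! ... l(alpha^k)!).\<close>
definition shuffle_basis :: "nat list \<Rightarrow> (nat list \<Rightarrow> 'k::field)" where
  "shuffle_basis alpha = (\<lambda>beta.
     \<Sum>bs\<in>{bs. concat bs = alpha \<and> [] \<notin> set bs \<and> map sum_list bs = beta}.
        1 / of_nat (prod_list (map (\<lambda>b. fact (length b)) bs)))"

definition Phi_S :: "('i \<Rightarrow> nat) \<Rightarrow> 'i list \<Rightarrow> (nat list \<Rightarrow> 'k::field)" where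
  "Phi_S deg w = shuffle_basis (map deg w)"

definition zeta_S :: "('i \<Rightarrow> nat) \<Rightarrow> 'i list \<Rightarrow> 'k::field" where
  "zeta_S deg w = zeta_QSym (Phi_S deg w)"

definition O_words :: "('i \<Rightarrow> nat) \<Rightarrow> ('i list \<Rightarrow> 'k::field) set" where
  "O_words deg = {f \<in> vecs. \<forall>w\<in>fsupp f. \<forall>i\<in>set w. odd (deg i)}"

definition E_words :: "('i \<Rightarrow> nat) \<Rightarrow> ('i list \<Rightarrow> 'k::field) set" where
  "E_words deg = {f \<in> vecs. \<forall>w\<in>fsupp f. \<forall>i\<in>set w. even (deg i)}"

definition O_msets :: "('i \<Rightarrow> nat) \<Rightarrow> ('i multiset \<Rightarrow> 'k::field) set" where
  "O_msets deg = {f \<in> vecs. \<forall>m\<in>fsupp f. \<forall>i\<in>set_mset m. odd (deg i)}"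

definition E_msets :: "('i \<Rightarrow> nat) \<Rightarrow> ('i multiset \<Rightarrow> 'k::field) set" where
  "E_msets deg = {f \<in> vecs. \<forall>m\<in>fsupp f. \<forall>i\<in>set_mset m. even (deg i)}"

end

theory Submission
  imports Defs "HOL-Library.FuncSet"
begin

(* All three characters are exponential in the letters of a word: zeta_S w = 1/|w|!, while
   zeta_T and zeta_Sym are products of 1/deg i over the letters.  The convolution of two such
   exponentials is again one (binomial theorem), and the coproducts are triangular, so the
   convolution inverse is zeta^-1(w) = (-1)^|w| zeta(w).  If every letter of w has odd degree
   then (-1)^deg(w) = (-1)^|w|, hence bar(zeta^-1) = zeta on such words; if every letter has even
   degree then bar(zeta) = zeta on them.  Finally, since the coproducts only split words into
   subwords, the words in a fixed set of letters span a subcoalgebra, which therefore lies in the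
   largest subcoalgebra inside the relevant kernel. *)

section \<open>Subcoalgebras spanned by basis elements\<close>

definition vecs_on :: "'b set \<Rightarrow> ('b \<Rightarrow> 'k::zero) set" where
  "vecs_on B = {f \<in> vecs. fsupp f \<subseteq> B}"

lemma subspace_of_vecs_on: "subspace_of (vecs_on B :: ('b \<Rightarrow> 'k::field) set)"
  unfolding subspace_of_def
proof (intro conjI ballI allI)
  fix f g :: "'b \<Rightarrow> 'k" and a :: 'k
  assume f: "f \<in> vecs_on B" and g: "g \<in> vecs_on B"
  have "fsupp (\<lambda>b. f b + g b) \<subseteq> fsupp f \<union> fsupp g"
    by (auto simp: fsupp_def)
  with f g show "(\<lambda>b. f b + g b) \<in> vecs_on B"
    by (auto simp: vecs_on_def vecs_def intro: finite_subset)
  have "fsupp (\<lambda>b. a * f b) \<subseteq> fsupp f"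
    by (auto simp: fsupp_def)
  with f show "(\<lambda>b. a * f b) \<in> vecs_on B"
    by (auto simp: vecs_on_def vecs_def intro: finite_subset)
qed (auto simp: vecs_on_def vecs_def fsupp_def)

lemma tensor_sq_vecs_onI:
  fixes h :: "'b \<times> 'b \<Rightarrow> 'k::field"
  assumes fin: "finite (fsupp h)" and sub: "\<And>p. p \<in> fsupp h \<Longrightarrow> fst p \<in> B \<and> snd p \<in> B"
  shows "h \<in> tensor_sq (vecs_on B)"
proof -
  define \<delta> :: "'b \<Rightarrow> 'b \<Rightarrow> 'k" where "\<delta> x = (\<lambda>z. if z = x then 1 else 0)" for x
  define t where "t q = tens (\<delta> (fst q)) (\<delta> (snd q))" for q
  define c where "c g = h (inv_into (fsupp h) t g)" for g
  have t_apply: "t q p = (if p = q then 1 else 0)" for q p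
    by (cases p; cases q) (auto simp: t_def tens_def \<delta>_def)
  have inj: "inj_on t (fsupp h)"
    by (rule inj_onI) (metis t_apply zero_neq_one)
  have "h = (\<lambda>p. \<Sum>g\<in>t ` fsupp h. c g * g p)"
  proof
    fix p
    have "(\<Sum>g\<in>t ` fsupp h. c g * g p) = (\<Sum>q\<in>fsupp h. if p = q then h q else 0)"
      by (simp add: sum.reindex[OF inj] c_def inv_into_f_f[OF inj] t_apply if_distrib cong: if_cong)
    also have "\<dots> = h p"
      using fin by (simp add: sum.delta fsupp_def)
    finally show "h p = (\<Sum>g\<in>t ` fsupp h. c g * g p)" by simp
  qed
  moreover have "t ` fsupp h \<subseteq> {tens f g | f g. f \<in> vecs_on B \<and> g \<in> vecs_on B}"
  proof (rule image_subsetI)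
    have \<delta>_in: "\<delta> x \<in> vecs_on B" if "x \<in> B" for x
    proof -
      have "fsupp (\<delta> x) = {x}" by (auto simp: fsupp_def \<delta>_def)
      then show ?thesis using that by (simp add: vecs_on_def vecs_def)
    qed
    fix q assume "q \<in> fsupp h"
    then show "t q \<in> {tens f g | f g. f \<in> vecs_on B \<and> g \<in> vecs_on B}"
      unfolding t_def using sub \<delta>_in by blast
  qed
  ultimately show ?thesis
    unfolding tensor_sq_def lin_span_def using fin by blast
qed

lemma subcoalgebra_vecs_on:
  fixes Delta :: "'b \<Rightarrow> ('b \<times> 'b \<Rightarrow> 'k::field)"
  assumes fin: "\<And>b. finite (fsupp (Delta b))"
    and closed: "\<And>b p. b \<in> B \<Longrightarrow> p \<in> fsupp (Delta b) \<Longrightarrow> fst p \<in> B \<and> snd p \<in> B"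
  shows "subcoalgebra Delta (vecs_on B)"
  unfolding subcoalgebra_def
proof (intro conjI ballI)
  show "subspace_of (vecs_on B :: ('b \<Rightarrow> 'k) set)"
    by (rule subspace_of_vecs_on)
  fix f :: "'b \<Rightarrow> 'k" assume f: "f \<in> vecs_on B"
  have supp: "fsupp (coprod Delta f) \<subseteq> (\<Union>b\<in>fsupp f. fsupp (Delta b))"
  proof
    fix p assume "p \<in> fsupp (coprod Delta f)"
    then have "(\<Sum>b\<in>fsupp f. f b * Delta b p) \<noteq> 0"
      by (simp add: coprod_def fsupp_def)
    then obtain b where "b \<in> fsupp f" "f b * Delta b p \<noteq> 0"
      by (rule sum.not_neutral_contains_not_neutral)
    then show "p \<in> (\<Union>b\<in>fsupp f. fsupp (Delta b))"
      by (auto simp: fsupp_def)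
  qed
  show "coprod Delta f \<in> tensor_sq (vecs_on B)"
  proof (rule tensor_sq_vecs_onI)
    have "finite (fsupp f)"
      using f by (simp add: vecs_on_def vecs_def)
    then show "finite (fsupp (coprod Delta f))"
      using fin by (blast intro: finite_subset[OF supp])
    show "fst p \<in> B \<and> snd p \<in> B" if "p \<in> fsupp (coprod Delta f)" for p
      using that supp f closed unfolding vecs_on_def by blast
  qed
qed

lemma subcoalgebra_subset_largest_subcoalg:
  assumes "subcoalgebra Delta C" and "C \<subseteq> K"
  shows "C \<subseteq> largest_subcoalg Delta K"
proof
  fix f assume "f \<in> C"
  then have "f \<in> \<Union>{C. subcoalgebra Delta C \<and> C \<subseteq> K}"
    using assms by blast
  then show "f \<in> largest_subcoalg Delta K"
    unfolding largest_subcoalg_def lin_span_def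
    by (intro CollectI exI[of _ "{f}"] exI[of _ "\<lambda>_. 1"]) auto
qed

lemma vecs_on_subset_ker_fun:
  assumes "\<And>b. b \<in> B \<Longrightarrow> phi b = 0"
  shows "vecs_on B \<subseteq> ker_fun phi"
  using assms unfolding vecs_on_def ker_fun_def apply_fun_def by (auto intro!: sum.neutral)

lemma vecs_on_subset_S_minus:
  assumes "subcoalgebra Delta (vecs_on B)"
    and "\<And>b. b \<in> B \<Longrightarrow> conv_inv Delta eps zeta b = (-1) ^ dg b * zeta b"
  shows "vecs_on B \<subseteq> S_minus Delta eps dg zeta"
  unfolding S_minus_def
proof (intro subcoalgebra_subset_largest_subcoalg[OF assms(1)] vecs_on_subset_ker_fun)
  fix b assume "b \<in> B"
  then show "bar dg (conv_inv Delta eps zeta) b - zeta b = 0"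
    by (simp add: bar_def assms(2) power_mult_distrib[symmetric])
qed

lemma vecs_on_subset_S_plus:
  assumes "subcoalgebra Delta (vecs_on B)" and "\<And>b. b \<in> B \<Longrightarrow> even (dg b)"
  shows "vecs_on B \<subseteq> S_plus Delta dg zeta"
  unfolding S_plus_def
  by (intro subcoalgebra_subset_largest_subcoalg[OF assms(1)] vecs_on_subset_ker_fun)
     (simp add: bar_def assms(2))

lemma conv_inv_eqI:
  fixes Delta :: "'b \<Rightarrow> ('b \<times> 'b \<Rightarrow> 'k::field)" and rank :: "'b \<Rightarrow> nat"
  assumes fin: "\<And>b. finite (fsupp (Delta b))"
    and unit: "\<And>b. Delta b (e, b) = 1" and zeta_unit: "zeta e = 1"
    and triangular: "\<And>b p. p \<in> fsupp (Delta b) \<Longrightarrow> p \<noteq> (e, b) \<Longrightarrow> rank (snd p) < rank b"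
    and right_inv: "conv Delta zeta psi = eps" and left_inv: "conv Delta psi zeta = eps"
  shows "conv_inv Delta eps zeta = psi"
  unfolding conv_inv_def
proof (rule the_equality)
  show "conv Delta zeta psi = eps \<and> conv Delta psi zeta = eps"
    using right_inv left_inv by simp
next
  fix psi' assume "conv Delta zeta psi' = eps \<and> conv Delta psi' zeta = eps"
  then have eq: "conv Delta zeta psi' b = conv Delta zeta psi b" for b
    using right_inv by simp
  have conv_split: "conv Delta zeta g b
      = g b + (\<Sum>p\<in>fsupp (Delta b) - {(e, b)}. Delta b p * zeta (fst p) * g (snd p))" for g b
  proof -
    have "(e, b) \<in> fsupp (Delta b)"
      using unit by (simp add: fsupp_def)
    then show ?thesis
      unfolding conv_def using fin unit zeta_unit by (simp add: sum.remove)
  qed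
  show "psi' = psi"
  proof
    fix b show "psi' b = psi b"
    proof (induction "rank b" arbitrary: b rule: less_induct)
      case less
      have "(\<Sum>p\<in>fsupp (Delta b) - {(e, b)}. Delta b p * zeta (fst p) * psi' (snd p))
          = (\<Sum>p\<in>fsupp (Delta b) - {(e, b)}. Delta b p * zeta (fst p) * psi (snd p))"
        by (intro sum.cong refl) (simp add: less triangular)
      then show ?case
        using eq[of b] by (simp only: conv_split) simp
    qed
  qed
qed

lemma conv_eq_sum_fibres:
  fixes Delta :: "'b \<Rightarrow> ('b \<times> 'b \<Rightarrow> 'k::field)"
  assumes fin: "finite A" and supp: "fsupp (Delta b) \<subseteq> g ` A"
    and coeff: "\<And>p. p \<in> g ` A \<Longrightarrow> Delta b p = (\<Sum>x\<in>{x\<in>A. g x = p}. c x)"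
  shows "conv Delta phi psi b = (\<Sum>x\<in>A. c x * phi (fst (g x)) * psi (snd (g x)))"
proof -
  have "conv Delta phi psi b = (\<Sum>p\<in>g ` A. Delta b p * phi (fst p) * psi (snd p))"
    unfolding conv_def by (rule sum.mono_neutral_left) (use fin supp in \<open>auto simp: fsupp_def\<close>)
  also have "\<dots> = (\<Sum>p\<in>g ` A. \<Sum>x\<in>{x\<in>A. g x = p}. c x * phi (fst (g x)) * psi (snd (g x)))"
    by (intro sum.cong refl) (simp add: coeff sum_distrib_right)
  also have "\<dots> = (\<Sum>x\<in>A. c x * phi (fst (g x)) * psi (snd (g x)))"
    by (rule sum.image_gen[symmetric]) (rule fin)
  finally show ?thesis .
qed

lemma conv_eq_sum_inj:
  fixes Delta :: "'b \<Rightarrow> ('b \<times> 'b \<Rightarrow> 'k::field)"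
  assumes fin: "finite A" and inj: "inj_on g A" and supp: "fsupp (Delta b) \<subseteq> g ` A"
    and coeff: "\<And>x. x \<in> A \<Longrightarrow> Delta b (g x) = c x"
  shows "conv Delta phi psi b = (\<Sum>x\<in>A. c x * phi (fst (g x)) * psi (snd (g x)))"
proof (rule conv_eq_sum_fibres[where Delta = Delta and b = b, OF fin supp])
  fix p assume "p \<in> g ` A"
  then obtain y where y: "y \<in> A" "p = g y" by blast
  then have "{x\<in>A. g x = p} = {y}"
    using inj by (auto dest: inj_onD)
  then show "Delta b p = (\<Sum>x\<in>{x\<in>A. g x = p}. c x)"
    using y coeff by simp
qed

section \<open>The shuffle algebra\<close>

lemma deconc_apply: "deconc w (x, y) = (if x @ y = w then 1 else 0)"
  by (simp add: deconc_def)

lemma fsupp_deconc: "fsupp (deconc w) \<subseteq> (\<lambda>k. (take k w, drop k w)) ` {..length w}"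
proof
  fix p assume "p \<in> fsupp (deconc w)"
  then obtain x y where "p = (x, y)" "x @ y = w"
    by (cases p) (auto simp: fsupp_def deconc_apply split: if_splits)
  then show "p \<in> (\<lambda>k. (take k w, drop k w)) ` {..length w}"
    by (intro image_eqI[of _ _ "length x"]) auto
qed

lemma finite_fsupp_deconc: "finite (fsupp (deconc w))"
  by (rule finite_subset[OF fsupp_deconc]) simp

lemma append_eq_of_fsupp_deconc: "p \<in> fsupp (deconc w) \<Longrightarrow> fst p @ snd p = w"
  by (cases p) (auto simp: fsupp_def deconc_apply split: if_splits)

lemma conv_deconc: "conv deconc phi psi w = (\<Sum>k\<le>length w. phi (take k w) * psi (drop k w))"
proof -
  have "inj_on (\<lambda>k. (take k w, drop k w)) {..length w}"
    by (rule inj_onI) (metis atMost_iff length_take min.absorb2 prod.inject)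
  then show ?thesis
    by (subst conv_eq_sum_inj[OF finite_atMost _ fsupp_deconc, where c = "\<lambda>_. 1"])
       (simp_all add: deconc_apply)
qed

lemma subcoalgebra_deconc_letters: "subcoalgebra deconc (vecs_on {w. \<forall>i\<in>set w. P i})"
  by (rule subcoalgebra_vecs_on[OF finite_fsupp_deconc])
     (auto dest!: append_eq_of_fsupp_deconc)

lemma M_eval_first_unit_vector:
  "M_eval 1 (\<lambda>i. if i = 0 then 1 else 0) beta = (if length beta \<le> 1 then 1 else (0::'k::field))"
proof -
  let ?I = "{is :: nat list. sorted_wrt (<) is \<and> length is = length beta \<and> set is \<subseteq> {..<1}}"
  consider "beta = []" | a where "beta = [a]" | a b r where "beta = a # b # r"
    by (metis list.exhaust)
  then show ?thesis
  proof cases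
    case 1
    then have I: "?I = {[]}" by auto
    show ?thesis unfolding M_eval_def I using 1 by simp
  next
    case 2
    then have I: "?I = {[0]}" by (auto simp: length_Suc_conv)
    show ?thesis unfolding M_eval_def I using 2 by simp
  next
    case 3
    then have I: "?I = {}" by (auto simp: length_Suc_conv)
    show ?thesis unfolding M_eval_def I using 3 by simp
  qed
qed

lemma length_le_length_concat: "[] \<notin> set bs \<Longrightarrow> length bs \<le> length (concat bs)"
proof (induction bs)
  case (Cons b bs)
  then show ?case by (cases b) auto
qed simp

lemma finite_concat_decompositions: "finite {bs. concat bs = alpha \<and> [] \<notin> set bs}"
proof (rule finite_subset)
  let ?L = "{b. set b \<subseteq> set alpha \<and> length b \<le> length alpha}"
  show "{bs. concat bs = alpha \<and> [] \<notin> set bs} \<subseteq> {bs. set bs \<subseteq> ?L \<and> length bs \<le> length alpha}"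
  proof (rule subsetI)
    fix bs assume "bs \<in> {bs. concat bs = alpha \<and> [] \<notin> set bs}"
    then have bs: "concat bs = alpha" "[] \<notin> set bs" by auto
    have "length b \<le> length alpha" if "b \<in> set bs" for b
    proof -
      have "length b \<le> sum_list (map length bs)"
        using that by (intro member_le_sum_list) auto
      then show ?thesis
        using bs(1) length_concat[of bs] by simp
    qed
    moreover have "length bs \<le> length alpha"
      using bs length_le_length_concat by metis
    ultimately show "bs \<in> {bs. set bs \<subseteq> ?L \<and> length bs \<le> length alpha}"
      using bs(1) by auto
  qed
  show "finite {bs. set bs \<subseteq> ?L \<and> length bs \<le> length alpha}"
    by (intro finite_lists_length_le) simp
qed

lemma finite_fsupp_shuffle_basis: "finite (fsupp (shuffle_basis alpha :: nat list \<Rightarrow> 'k::field))"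
proof -
  have "fsupp (shuffle_basis alpha :: nat list \<Rightarrow> 'k)
      \<subseteq> map sum_list ` {bs. concat bs = alpha \<and> [] \<notin> set bs}"
  proof
    fix beta assume "beta \<in> fsupp (shuffle_basis alpha :: nat list \<Rightarrow> 'k)"
    then have "shuffle_basis alpha beta \<noteq> (0::'k)"
      by (simp add: fsupp_def)
    then have "{bs. concat bs = alpha \<and> [] \<notin> set bs \<and> map sum_list bs = beta} \<noteq> {}"
      unfolding shuffle_basis_def by (metis sum.empty)
    then show "beta \<in> map sum_list ` {bs. concat bs = alpha \<and> [] \<notin> set bs}"
      by blast
  qed
  then show ?thesis
    by (rule finite_subset) (intro finite_imageI finite_concat_decompositions)
qed

lemma shuffle_basis_Nil: "shuffle_basis alpha [] = (if alpha = [] then 1 else (0::'k::field))"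
proof -
  have "{bs. concat bs = alpha \<and> [] \<notin> set bs \<and> map sum_list bs = []}
      = (if alpha = [] then {[]} else {})"
    by auto
  then show ?thesis by (simp add: shuffle_basis_def)
qed

lemma shuffle_basis_singleton:
  "shuffle_basis alpha [a] = (if alpha \<noteq> [] \<and> sum_list alpha = a
     then 1 / of_nat (fact (length alpha)) else (0::'k::field))"
proof -
  have "{bs. concat bs = alpha \<and> [] \<notin> set bs \<and> map sum_list bs = [a]}
      = (if alpha \<noteq> [] \<and> sum_list alpha = a then {[alpha]} else {})"
  proof (intro set_eqI iffI)
    fix bs assume "bs \<in> {bs. concat bs = alpha \<and> [] \<notin> set bs \<and> map sum_list bs = [a]}"
    then obtain b where "bs = [b]" "concat bs = alpha" "[] \<notin> set bs" "sum_list b = a"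
      by (auto simp: map_eq_Cons_conv)
    then show "bs \<in> (if alpha \<noteq> [] \<and> sum_list alpha = a then {[alpha]} else {})"
      by simp
  qed (auto split: if_splits)
  then show ?thesis by (simp add: shuffle_basis_def)
qed

lemma zeta_S_eq: "zeta_S deg w = (1 / fact (length w) :: 'k::field_char_0)"
proof -
  let ?f = "Phi_S deg w :: nat list \<Rightarrow> 'k"
  \<comment> \<open>the only composition with at most one part in the support of S_(deg w)\<close>
  define beta0 where "beta0 = (if w = [] then [] else [sum_list (map deg w)])"
  have f_beta0: "?f beta0 = 1 / fact (length w)"
    by (simp add: Phi_S_def beta0_def shuffle_basis_Nil shuffle_basis_singleton)
  have "?f beta * M_eval 1 (\<lambda>i. if i = 0 then 1 else 0) beta = (if beta = beta0 then ?f beta else 0)"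
    for beta
  proof -
    consider "beta = []" | a where "beta = [a]" | "length beta > 1"
      by (metis One_nat_def length_0_conv length_Suc_conv linorder_neqE_nat less_one)
    then show ?thesis
      unfolding M_eval_first_unit_vector
      by cases (auto simp: beta0_def Phi_S_def shuffle_basis_Nil
                  shuffle_basis_singleton)
  qed
  then have "zeta_S deg w = (\<Sum>beta\<in>fsupp ?f. if beta = beta0 then ?f beta else 0)"
    unfolding zeta_S_def zeta_QSym_def qsym_eval_def by presburger
  also have "\<dots> = (if beta0 \<in> fsupp ?f then ?f beta0 else 0)"
    by (rule sum.delta) (simp add: Phi_S_def finite_fsupp_shuffle_basis)
  also have "\<dots> = ?f beta0"
    by (simp add: fsupp_def)
  finally show ?thesis
    by (simp add: f_beta0)
qed

lemma sum_divided_powers: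
  "(\<Sum>k\<le>n. a ^ k / fact k * (b ^ (n - k) / fact (n - k))) = (a + b) ^ n / (fact n :: 'k::field_char_0)"
proof -
  have "(a + b) ^ n / fact n = (\<Sum>k\<le>n. of_nat (n choose k) * a ^ k * b ^ (n - k) / fact n)"
    by (simp add: binomial_ring sum_divide_distrib)
  also have "\<dots> = (\<Sum>k\<le>n. a ^ k / fact k * (b ^ (n - k) / fact (n - k)))"
    by (intro sum.cong refl) (simp add: binomial_fact field_simps)
  finally show ?thesis by simp
qed

lemma conv_deconc_divided_powers:
  fixes a b :: "'k::field_char_0"
  shows "conv deconc (\<lambda>w. a ^ length w / fact (length w)) (\<lambda>w. b ^ length w / fact (length w)) w
       = (a + b) ^ length w / fact (length w)"
  unfolding conv_deconc sum_divided_powers[symmetric]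
  by (intro sum.cong refl) (simp add: min_absorb2)

lemma conv_inv_zeta_S:
  "conv_inv deconc eps_word (zeta_S deg) w = (-1) ^ length w * (zeta_S deg w :: 'k::field_char_0)"
proof -
  have zeta: "zeta_S deg = (\<lambda>w. 1 ^ length w / fact (length w) :: 'k)"
    by (simp add: fun_eq_iff zeta_S_eq)
  have eps: "eps_word = (\<lambda>w. 0 ^ length w / fact (length w) :: 'k)"
    by (simp add: fun_eq_iff eps_word_def)
  have "conv_inv deconc eps_word (zeta_S deg) = (\<lambda>w. (-1) ^ length w / fact (length w) :: 'k)"
  proof (rule conv_inv_eqI[where e = "[]" and rank = length])
    show "length (snd p) < length b" if "p \<in> fsupp (deconc b)" "p \<noteq> ([], b)" for p b
      using append_eq_of_fsupp_deconc[OF that(1)] that(2) by (cases p) auto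
    show "conv deconc (zeta_S deg) (\<lambda>w. (-1) ^ length w / fact (length w)) = (eps_word :: _ \<Rightarrow> 'k)"
      unfolding zeta eps by (intro ext) (simp only: conv_deconc_divided_powers, simp)
    show "conv deconc (\<lambda>w. (-1) ^ length w / fact (length w)) (zeta_S deg) = (eps_word :: _ \<Rightarrow> 'k)"
      unfolding zeta eps by (intro ext) (simp only: conv_deconc_divided_powers, simp)
  qed (simp_all add: finite_fsupp_deconc zeta_S_eq deconc_apply)
  then show ?thesis
    by (simp add: zeta_S_eq)
qed

section \<open>The tensor algebra\<close>

definition nths_split :: "'i list \<Rightarrow> nat set \<Rightarrow> 'i list \<times> 'i list" where
  "nths_split w I = (nths w I, nths w ({..<length w} - I))"

lemma unshuffle_eq_card:
  "unshuffle w p = of_nat (card {I \<in> Pow {..<length w}. nths_split w I = p})"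
proof -
  obtain x y where p: "p = (x, y)" by (cases p)
  have "{I. I \<subseteq> {..<length w} \<and> nths w I = x \<and> nths w ({..<length w} - I) = y}
      = {I \<in> Pow {..<length w}. nths_split w I = p}"
    by (auto simp: nths_split_def p)
  then show ?thesis by (simp add: unshuffle_def p)
qed

lemma fsupp_unshuffle:
  "fsupp (unshuffle w :: _ \<Rightarrow> 'k::field) \<subseteq> nths_split w ` Pow {..<length w}"
proof
  fix p assume "p \<in> fsupp (unshuffle w :: _ \<Rightarrow> 'k)"
  then have "of_nat (card {I \<in> Pow {..<length w}. nths_split w I = p}) \<noteq> (0::'k)"
    unfolding fsupp_def unshuffle_eq_card by (rule CollectD)
  then have "{I \<in> Pow {..<length w}. nths_split w I = p} \<noteq> {}"
    by (metis card.empty of_nat_0)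
  then show "p \<in> nths_split w ` Pow {..<length w}" by blast
qed

lemma finite_fsupp_unshuffle: "finite (fsupp (unshuffle w :: _ \<Rightarrow> 'k::field))"
  by (rule finite_subset[OF fsupp_unshuffle]) simp

lemma conv_unshuffle:
  "conv unshuffle phi psi w
     = (\<Sum>I\<in>Pow {..<length w}. phi (nths w I) * (psi (nths w ({..<length w} - I)) :: 'k::field))"
  by (subst conv_eq_sum_fibres[OF _ fsupp_unshuffle, where c = "\<lambda>_. 1"])
     (simp_all add: unshuffle_eq_card nths_split_def)

lemma length_nths_subset: "I \<subseteq> {..<length w} \<Longrightarrow> length (nths w I) = card I"
  by (simp add: length_nths Int_absorb1[of I] Collect_conj_eq lessThan_def[symmetric])

lemma unshuffle_Nil_left: "unshuffle w ([], w) = (1::'k::field)"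
proof -
  have "{I \<in> Pow {..<length w}. nths_split w I = ([], w)} = {{}}"
  proof (intro set_eqI iffI)
    fix I assume "I \<in> {I \<in> Pow {..<length w}. nths_split w I = ([], w)}"
    then have "I \<subseteq> {..<length w}" "card I = 0"
      by (auto simp: nths_split_def dest: length_nths_subset)
    then show "I \<in> {{}}"
      using finite_subset by fastforce
  qed (simp add: nths_split_def)
  then show ?thesis
    by (simp add: unshuffle_eq_card)
qed

lemma length_snd_less_of_fsupp_unshuffle:
  assumes "p \<in> fsupp (unshuffle w :: _ \<Rightarrow> 'k::field)" and "p \<noteq> ([], w)"
  shows "length (snd p) < length w"
proof -
  obtain I where I: "I \<subseteq> {..<length w}" "p = nths_split w I"
    using fsupp_unshuffle assms(1) by blast
  with assms(2) have "I \<noteq> {}"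
    by (auto simp: nths_split_def)
  have "length (snd p) = card ({..<length w} - I)"
    using I by (simp add: nths_split_def length_nths_subset)
  also have "\<dots> < card {..<length w}"
    using I \<open>I \<noteq> {}\<close> by (intro psubset_card_mono) auto
  finally show ?thesis by simp
qed

lemma subcoalgebra_unshuffle_letters:
  "subcoalgebra (unshuffle :: _ \<Rightarrow> _ \<Rightarrow> 'k::field) (vecs_on {w. \<forall>i\<in>set w. P i})"
proof (rule subcoalgebra_vecs_on[OF finite_fsupp_unshuffle])
  fix w and p :: "'a list \<times> 'a list"
  assume "w \<in> {w. \<forall>i\<in>set w. P i}" "p \<in> fsupp (unshuffle w :: _ \<Rightarrow> 'k)"
  then show "fst p \<in> {w. \<forall>i\<in>set w. P i} \<and> snd p \<in> {w. \<forall>i\<in>set w. P i}"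
    using fsupp_unshuffle set_nths_subset by (fastforce simp: nths_split_def)
qed

lemma prod_list_map_nths:
  "prod_list (map f (nths w I)) = (\<Prod>j<length w. if j \<in> I then f (w ! j) else (1::'k::comm_monoid_mult))"
proof (induction w arbitrary: I)
  case (Cons x w)
  have "(\<Prod>j<length w. if Suc j \<in> I then f ((x # w) ! Suc j) else 1)
      = (\<Prod>j<length w. if Suc j \<in> I then f (w ! j) else 1)"
    by (intro prod.cong refl) (simp only: nth_Cons_Suc)
  then show ?case
    by (simp add: nths_Cons Cons.IH prod.lessThan_Suc_shift del: prod.lessThan_Suc)
qed simp

lemma conv_unshuffle_prod_list:
  fixes u v :: "'i \<Rightarrow> 'k::field"
  shows "conv unshuffle (\<lambda>w. prod_list (map u w)) (\<lambda>w. prod_list (map v w)) w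
       = (\<Prod>j<length w. u (w ! j) + v (w ! j))"
proof -
  let ?A = "{..<length w}"
  have "conv unshuffle (\<lambda>w. prod_list (map u w)) (\<lambda>w. prod_list (map v w)) w
      = (\<Sum>I\<in>Pow ?A. (\<Prod>j\<in>I. u (w ! j)) * (\<Prod>j\<in>?A - I. v (w ! j)))"
    unfolding conv_unshuffle prod_list_map_nths
  proof (intro sum.cong refl)
    fix I assume "I \<in> Pow ?A"
    then have "?A \<inter> I = I" "?A \<inter> (?A - I) = ?A - I"
      by auto
    then show "(\<Prod>j<length w. if j \<in> I then u (w ! j) else 1)
        * (\<Prod>j<length w. if j \<in> ?A - I then v (w ! j) else 1)
        = (\<Prod>j\<in>I. u (w ! j)) * (\<Prod>j\<in>?A - I. v (w ! j))"
      by (simp only: prod.inter_restrict[OF finite_lessThan, symmetric])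
  qed
  also have "\<dots> = (\<Prod>j\<in>?A. u (w ! j) + v (w ! j))"
    by (rule prod_add[symmetric]) simp
  finally show ?thesis .
qed

lemma conv_inv_zeta_T:
  fixes deg :: "'i \<Rightarrow> nat"
  shows "conv_inv unshuffle eps_word (zeta_T deg) w = (-1) ^ length w * (zeta_T deg w :: 'k::field)"
proof -
  let ?c = "\<lambda>i. 1 / of_nat (deg i) :: 'k"
  have "conv_inv unshuffle eps_word (zeta_T deg) = (\<lambda>w. prod_list (map (\<lambda>i. - ?c i) w))"
  proof (rule conv_inv_eqI[where e = "[]" and rank = length])
    show "conv unshuffle (zeta_T deg) (\<lambda>w. prod_list (map (\<lambda>i. - ?c i) w)) = eps_word"
      unfolding zeta_T_def by (intro ext) (simp add: conv_unshuffle_prod_list eps_word_def)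
    show "conv unshuffle (\<lambda>w. prod_list (map (\<lambda>i. - ?c i) w)) (zeta_T deg) = eps_word"
      unfolding zeta_T_def by (intro ext) (simp add: conv_unshuffle_prod_list eps_word_def)
  qed (simp_all add: finite_fsupp_unshuffle unshuffle_Nil_left length_snd_less_of_fsupp_unshuffle
         zeta_T_def)
  moreover have "prod_list (map (\<lambda>i. - r i) w) = (-1) ^ length w * prod_list (map r w)"
    for r :: "'i \<Rightarrow> 'k"
    by (induction w) auto
  ultimately show ?thesis
    by (simp add: zeta_T_def)
qed

section \<open>The symmetric algebra\<close>

lemma sym_coprod_apply:
  "sym_coprod m (a, b)
     = (if a + b = m then (\<Prod>i\<in>set_mset m. of_nat (count m i choose count a i)) else 0)"
  by (simp add: sym_coprod_def)

lemma count_sum_replicate_mset: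
  "finite S \<Longrightarrow> count (\<Sum>i\<in>S. replicate_mset (g i) i) x = (if x \<in> S then g x else 0)"
  by (simp add: count_sum sum.delta')

lemma bij_betw_submultisets_PiE:
  "bij_betw (\<lambda>a. restrict (count a) (set_mset m)) {a. a \<subseteq># m}
     (PiE (set_mset m) (\<lambda>i. {..count m i}))"
proof (rule bij_betw_byWitness[where f' = "\<lambda>g. \<Sum>i\<in>set_mset m. replicate_mset (g i) i"])
  show "\<forall>a\<in>{a. a \<subseteq># m}. (\<Sum>i\<in>set_mset m. replicate_mset (restrict (count a) (set_mset m) i) i) = a"
  proof (intro ballI multiset_eqI)
    fix a x assume "a \<in> {a. a \<subseteq># m}"
    then have "x \<notin># m \<Longrightarrow> count a x = 0"
      by (metis count_eq_zero_iff mem_Collect_eq mset_subset_eqD)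
    then show "count (\<Sum>i\<in>set_mset m. replicate_mset (restrict (count a) (set_mset m) i) i) x
        = count a x"
      by (simp add: count_sum_replicate_mset)
  qed
  show "\<forall>g\<in>PiE (set_mset m) (\<lambda>i. {..count m i}).
          restrict (count (\<Sum>i\<in>set_mset m. replicate_mset (g i) i)) (set_mset m) = g"
  proof (intro ballI ext)
    fix g x assume g: "g \<in> PiE (set_mset m) (\<lambda>i. {..count m i})"
    show "restrict (count (\<Sum>i\<in>set_mset m. replicate_mset (g i) i)) (set_mset m) x = g x"
      using PiE_arb[OF g, of x] by (simp add: count_sum_replicate_mset)
  qed
  show "(\<lambda>a. restrict (count a) (set_mset m)) ` {a. a \<subseteq># m} \<subseteq> PiE (set_mset m) (\<lambda>i. {..count m i})"
    by (auto simp: mset_subset_eq_count)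
  show "(\<lambda>g. \<Sum>i\<in>set_mset m. replicate_mset (g i) i) ` PiE (set_mset m) (\<lambda>i. {..count m i})
      \<subseteq> {a. a \<subseteq># m}"
  proof (rule image_subsetI)
    fix g assume g: "g \<in> PiE (set_mset m) (\<lambda>i. {..count m i})"
    have "count (\<Sum>i\<in>set_mset m. replicate_mset (g i) i) x \<le> count m x" for x
      using g by (auto simp: count_sum_replicate_mset PiE_iff)
    then show "(\<Sum>i\<in>set_mset m. replicate_mset (g i) i) \<in> {a. a \<subseteq># m}"
      by (simp add: subseteq_mset_def)
  qed
qed

lemma finite_submultisets: "finite {a. a \<subseteq># m}"
  using bij_betw_finite[OF bij_betw_submultisets_PiE[of m]] by (simp add: finite_PiE)

lemma add_eq_of_fsupp_sym_coprod: "p \<in> fsupp (sym_coprod m :: _ \<Rightarrow> 'k::field) \<Longrightarrow> fst p + snd p = m"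
  by (cases p) (auto simp: fsupp_def sym_coprod_apply split: if_splits)

lemma fsupp_sym_coprod:
  "fsupp (sym_coprod m :: _ \<Rightarrow> 'k::field) \<subseteq> (\<lambda>a. (a, m - a)) ` {a. a \<subseteq># m}"
proof
  fix p assume "p \<in> fsupp (sym_coprod m :: _ \<Rightarrow> 'k)"
  then have "fst p + snd p = m"
    by (rule add_eq_of_fsupp_sym_coprod)
  then show "p \<in> (\<lambda>a. (a, m - a)) ` {a. a \<subseteq># m}"
    by (intro image_eqI[of _ _ "fst p"]) auto
qed

lemma finite_fsupp_sym_coprod: "finite (fsupp (sym_coprod m :: _ \<Rightarrow> 'k::field))"
  by (rule finite_subset[OF fsupp_sym_coprod]) (simp add: finite_submultisets)

lemma subcoalgebra_sym_coprod_letters: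
  "subcoalgebra (sym_coprod :: _ \<Rightarrow> _ \<Rightarrow> 'k::field) (vecs_on {m. \<forall>i\<in>set_mset m. P i})"
  by (rule subcoalgebra_vecs_on[OF finite_fsupp_sym_coprod])
     (auto dest!: add_eq_of_fsupp_sym_coprod)

lemma conv_sym_coprod:
  "conv sym_coprod phi psi m = (\<Sum>a\<in>{a. a \<subseteq># m}.
      (\<Prod>i\<in>set_mset m. of_nat (count m i choose count a i)) * phi a * (psi (m - a) :: 'k::field))"
proof -
  have "inj_on (\<lambda>a. (a, m - a)) {a. a \<subseteq># m}"
    by (rule inj_onI) simp
  then show ?thesis
    by (subst conv_eq_sum_inj[OF finite_submultisets _ fsupp_sym_coprod])
       (simp_all add: sym_coprod_apply)
qed

lemma prod_mset_image_mset_eq_prod: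
  assumes "finite T" and "set_mset a \<subseteq> T"
  shows "prod_mset (image_mset f a) = (\<Prod>i\<in>T. (f i :: 'k::comm_monoid_mult) ^ count a i)"
  unfolding image_prod_mset_multiplicity
  by (rule prod.mono_neutral_left) (use assms in \<open>auto simp: not_in_iff\<close>)

lemma conv_sym_coprod_prod_mset:
  fixes u v :: "'i \<Rightarrow> 'k::field"
  shows "conv sym_coprod (\<lambda>a. prod_mset (image_mset u a)) (\<lambda>a. prod_mset (image_mset v a)) m
       = (\<Prod>i\<in>set_mset m. (u i + v i) ^ count m i)"
proof -
  let ?S = "set_mset m"
  define F where "F i j = of_nat (count m i choose j) * u i ^ j * v i ^ (count m i - j)" for i j
  have "conv sym_coprod (\<lambda>a. prod_mset (image_mset u a)) (\<lambda>a. prod_mset (image_mset v a)) m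
      = (\<Sum>a\<in>{a. a \<subseteq># m}. \<Prod>i\<in>?S. F i (restrict (count a) ?S i))"
    unfolding conv_sym_coprod
  proof (intro sum.cong refl)
    fix a assume "a \<in> {a. a \<subseteq># m}"
    then have "set_mset a \<subseteq> ?S" "set_mset (m - a) \<subseteq> ?S"
      by (auto dest: set_mset_mono in_diffD)
    then show "(\<Prod>i\<in>?S. of_nat (count m i choose count a i)) * prod_mset (image_mset u a)
        * prod_mset (image_mset v (m - a)) = (\<Prod>i\<in>?S. F i (restrict (count a) ?S i))"
      by (simp add: prod_mset_image_mset_eq_prod[of ?S] F_def prod.distrib)
  qed
  also have "\<dots> = (\<Sum>g\<in>PiE ?S (\<lambda>i. {..count m i}). \<Prod>i\<in>?S. F i (g i))"
    by (rule sum.reindex_bij_betw[OF bij_betw_submultisets_PiE])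
  also have "\<dots> = (\<Prod>i\<in>?S. \<Sum>j\<le>count m i. F i j)"
    by (rule prod_sum_PiE[symmetric]) auto
  also have "\<dots> = (\<Prod>i\<in>?S. (u i + v i) ^ count m i)"
    by (simp add: F_def binomial_ring)
  finally show ?thesis .
qed

lemma conv_inv_zeta_Sym:
  fixes deg :: "'i \<Rightarrow> nat"
  shows "conv_inv sym_coprod eps_mset (zeta_Sym deg) m = (-1) ^ size m * (zeta_Sym deg m :: 'k::field)"
proof -
  let ?c = "\<lambda>i. 1 / of_nat (deg i) :: 'k"
  have eps: "eps_mset m = (\<Prod>i\<in>set_mset m. (0::'k) ^ count m i)" for m :: "'i multiset"
    by (cases m) (auto simp: eps_mset_def image_prod_mset_multiplicity[symmetric])
  have "conv_inv sym_coprod eps_mset (zeta_Sym deg) = (\<lambda>m. prod_mset (image_mset (\<lambda>i. - ?c i) m))"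
  proof (rule conv_inv_eqI[where e = "{#}" and rank = size])
    show "size (snd p) < size m"
      if "p \<in> fsupp (sym_coprod m :: _ \<Rightarrow> 'k)" "p \<noteq> ({#}, m)" for p m
      using add_eq_of_fsupp_sym_coprod[OF that(1)] that(2)
      by (cases p) (auto simp: nonempty_has_size)
    show "conv sym_coprod (zeta_Sym deg) (\<lambda>m. prod_mset (image_mset (\<lambda>i. - ?c i) m)) = eps_mset"
      unfolding zeta_Sym_def by (intro ext) (simp add: conv_sym_coprod_prod_mset eps)
    show "conv sym_coprod (\<lambda>m. prod_mset (image_mset (\<lambda>i. - ?c i) m)) (zeta_Sym deg) = eps_mset"
      unfolding zeta_Sym_def by (intro ext) (simp add: conv_sym_coprod_prod_mset eps)
  qed (simp_all add: finite_fsupp_sym_coprod sym_coprod_apply zeta_Sym_def)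
  moreover have "prod_mset (image_mset (\<lambda>i. - r i) m) = (-1) ^ size m * prod_mset (image_mset r m)"
    for r :: "'i \<Rightarrow> 'k"
    by (induction m) auto
  ultimately show ?thesis
    by (simp add: zeta_Sym_def)
qed

lemma neg_one_power_word_deg:
  "\<forall>i\<in>set w. odd (deg i) \<Longrightarrow> (-1) ^ word_deg deg w = ((-1) ^ length w :: 'a::ring_1)"
  by (induction w) (auto simp: word_deg_def power_add)

lemma even_word_deg: "\<forall>i\<in>set w. even (deg i) \<Longrightarrow> even (word_deg deg w)"
  by (induction w) (auto simp: word_deg_def)

lemma neg_one_power_mset_deg:
  "\<forall>i\<in>set_mset m. odd (deg i) \<Longrightarrow> (-1) ^ mset_deg deg m = ((-1) ^ size m :: 'a::ring_1)"
  by (induction m) (auto simp: mset_deg_def power_add)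

lemma even_mset_deg: "\<forall>i\<in>set_mset m. even (deg i) \<Longrightarrow> even (mset_deg deg m)"
  by (induction m) (auto simp: mset_deg_def)

lemma O_words_eq_vecs_on: "O_words deg = vecs_on {w. \<forall>i\<in>set w. odd (deg i)}"
  by (auto simp: O_words_def vecs_on_def)

lemma E_words_eq_vecs_on: "E_words deg = vecs_on {w. \<forall>i\<in>set w. even (deg i)}"
  by (auto simp: E_words_def vecs_on_def)

lemma O_msets_eq_vecs_on: "O_msets deg = vecs_on {m. \<forall>i\<in>set_mset m. odd (deg i)}"
  by (auto simp: O_msets_def vecs_on_def)

lemma E_msets_eq_vecs_on: "E_msets deg = vecs_on {m. \<forall>i\<in>set_mset m. even (deg i)}"
  by (auto simp: E_msets_def vecs_on_def)

theorem mainTheorem10: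
  fixes deg :: "'i \<Rightarrow> nat"
  assumes pos: "\<forall>i. 0 < deg i"
  shows
    "(O_words deg :: ('i list \<Rightarrow> 'k::field_char_0) set)
        \<subseteq> S_minus deconc eps_word (word_deg deg) (zeta_S deg)
   \<and> (E_words deg :: ('i list \<Rightarrow> 'k) set) \<subseteq> S_plus deconc (word_deg deg) (zeta_S deg)
   \<and> (O_words deg :: ('i list \<Rightarrow> 'k) set)
        \<subseteq> S_minus unshuffle eps_word (word_deg deg) (zeta_T deg)
   \<and> (E_words deg :: ('i list \<Rightarrow> 'k) set) \<subseteq> S_plus unshuffle (word_deg deg) (zeta_T deg)
   \<and> (O_msets deg :: ('i multiset \<Rightarrow> 'k) set)
        \<subseteq> S_minus sym_coprod eps_mset (mset_deg deg) (zeta_Sym deg)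
   \<and> (E_msets deg :: ('i multiset \<Rightarrow> 'k) set) \<subseteq> S_plus sym_coprod (mset_deg deg) (zeta_Sym deg)"
  unfolding O_words_eq_vecs_on E_words_eq_vecs_on O_msets_eq_vecs_on E_msets_eq_vecs_on
proof (intro conjI)
  show "vecs_on {w. \<forall>i\<in>set w. odd (deg i)} \<subseteq> S_minus deconc eps_word (word_deg deg) (zeta_S deg :: _ \<Rightarrow> 'k)"
    by (rule vecs_on_subset_S_minus[OF subcoalgebra_deconc_letters])
       (simp add: conv_inv_zeta_S neg_one_power_word_deg)
  show "vecs_on {w. \<forall>i\<in>set w. even (deg i)} \<subseteq> S_plus deconc (word_deg deg) (zeta_S deg :: _ \<Rightarrow> 'k)"
    by (rule vecs_on_subset_S_plus[OF subcoalgebra_deconc_letters]) (simp add: even_word_deg)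
  show "vecs_on {w. \<forall>i\<in>set w. odd (deg i)} \<subseteq> S_minus unshuffle eps_word (word_deg deg) (zeta_T deg :: _ \<Rightarrow> 'k)"
    by (rule vecs_on_subset_S_minus[OF subcoalgebra_unshuffle_letters])
       (simp add: conv_inv_zeta_T neg_one_power_word_deg)
  show "vecs_on {w. \<forall>i\<in>set w. even (deg i)} \<subseteq> S_plus unshuffle (word_deg deg) (zeta_T deg :: _ \<Rightarrow> 'k)"
    by (rule vecs_on_subset_S_plus[OF subcoalgebra_unshuffle_letters]) (simp add: even_word_deg)
  show "vecs_on {m. \<forall>i\<in>set_mset m. odd (deg i)}
      \<subseteq> S_minus sym_coprod eps_mset (mset_deg deg) (zeta_Sym deg :: _ \<Rightarrow> 'k)"
    by (rule vecs_on_subset_S_minus[OF subcoalgebra_sym_coprod_letters])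
       (simp add: conv_inv_zeta_Sym neg_one_power_mset_deg)
  show "vecs_on {m. \<forall>i\<in>set_mset m. even (deg i)}
      \<subseteq> S_plus sym_coprod (mset_deg deg) (zeta_Sym deg :: _ \<Rightarrow> 'k)"
    by (rule vecs_on_subset_S_plus[OF subcoalgebra_sym_coprod_letters]) (simp add: even_mset_deg)
qed

end
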